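(* Let $G$ be a finitely generated group, $U$ a finite generating set of $G$, and $H\leqslant G$ with $[G:H]=d$. There exists a finite generating set $V$ of $H$ such that $|V|\geqslant\frac{1}{d}|U|$ and $V\subset B_U(2d!+1)$.
   Context: $B_U(r)$ denotes the closed ball of radius $r$ about the identity in $G$ for the word metric induced by $U$. *)

theory Defs
  imports "HOL-Algebra.Algebra"
begin

definition word_ball :: "('a, 'b) monoid_scheme \<Rightarrow> 'a set \<Rightarrow> nat \<Rightarrow> 'a set" where
  "word_ball G U r =
     {foldr (\<otimes>\<^bsub>G\<^esub>) xs \<one>\<^bsub>G\<^esub> | xs. length xs \<le> r \<and> set xs \<subseteq> U \<union> (\<lambda>u. inv\<^bsub>G\<^esub> u) ` U}"

end

theory Submission
  imports Defs
begin

text \<open>Let \<open>d\<close> be the index of \<open>H\<close> and call the elements of \<open>U\<close> and their inverses letters.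
  The right cosets \<open>H t\<close> with \<open>t \<in> B(k)\<close> increase with \<open>k\<close>, and as soon as they stop growing
  they are closed under right multiplication by letters, hence exhaust \<open>G/H\<close>; so \<open>B(d)\<close>
  contains a right transversal \<open>T\<close>. By Schreier's rewriting, \<open>H\<close> is generated by \<open>H \<inter> T\<close>
  together with the Schreier generators \<open>t x t'\<^sup>-\<^sup>1\<close> (\<open>t, t' \<in> T\<close>, \<open>x\<close> a letter), all of which
  lie in \<open>H \<inter> B(2d+1) \<subseteq> H \<inter> B(2d!+1)\<close>. For the size bound, the letters \<open>u\<close> in one coset
  \<open>H u\<^sub>0\<close> are mapped injectively into \<open>H \<inter> B(2)\<close> by \<open>u \<mapsto> u u\<^sub>0\<^sup>-\<^sup>1\<close>, so \<open>|U| \<le> d |H \<inter> B(2)|\<close>.\<close>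

lemma increasing_chain_saturates:
  fixes A :: "nat \<Rightarrow> 'a set"
  assumes "finite S" and "\<And>k. A k \<subseteq> A (Suc k)" and "\<And>k. A k \<subseteq> S"
    and "\<And>k. A (Suc k) \<subseteq> A k \<Longrightarrow> A k = S"
  shows "A (card S) = S"
proof -
  have "A k = S \<or> k \<le> card (A k)" for k
  proof (induction k)
    case (Suc k)
    show ?case
    proof (cases "A (Suc k) \<subseteq> A k")
      case True
      then show ?thesis using assms(2,3,4) by blast
    next
      case False
      then have "A k \<subset> A (Suc k)" using assms(2) by blast
      then have "card (A k) < card (A (Suc k))"
        using assms(1,3) by (meson psubset_card_mono rev_finite_subset)
      with Suc.IH show ?thesis using False assms(3) by auto
    qed
  qed simp
  then show ?thesis
    using assms(1,3) by (meson card_seteq)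
qed

context group begin

lemma foldr_mult_append:
  "set xs \<subseteq> carrier G \<Longrightarrow> set ys \<subseteq> carrier G \<Longrightarrow>
   foldr (\<otimes>) (xs @ ys) \<one> = foldr (\<otimes>) xs \<one> \<otimes> foldr (\<otimes>) ys \<one>"
  by (induction xs) (auto simp: m_assoc)

lemma foldr_mult_rev_inv:
  "set xs \<subseteq> carrier G \<Longrightarrow> foldr (\<otimes>) (rev (map (m_inv G) xs)) \<one> = inv (foldr (\<otimes>) xs \<one>)"
proof (induction xs)
  case (Cons a xs)
  then have "set (rev (map (m_inv G) xs)) \<subseteq> carrier G" by auto
  with Cons show ?case by (simp add: foldr_mult_append inv_mult_group del: foldr_append)
qed simp

lemma word_ball_iff:
  "a \<in> word_ball G U r \<longleftrightarrow> (\<exists>xs. a = foldr (\<otimes>) xs \<one> \<and> length xs \<le> r \<and> set xs \<subseteq> U \<union> m_inv G ` U)"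
  unfolding word_ball_def by (simp only: mem_Collect_eq)

lemma word_ball_subset_carrier:
  assumes "U \<subseteq> carrier G" shows "word_ball G U r \<subseteq> carrier G"
  using assms unfolding word_ball_def by (fastforce intro!: multlist_closed)

lemma word_ball_mono: "r \<le> s \<Longrightarrow> word_ball G U r \<subseteq> word_ball G U s"
  unfolding word_ball_def by fastforce

lemma one_in_word_ball: "\<one> \<in> word_ball G U r"
  unfolding word_ball_iff by (intro exI[of _ "[]"]) simp

lemma letter_in_word_ball:
  "U \<subseteq> carrier G \<Longrightarrow> x \<in> U \<union> m_inv G ` U \<Longrightarrow> x \<in> word_ball G U 1"
  unfolding word_ball_iff by (intro exI[of _ "[x]"]) auto

lemma word_ball_mult:
  assumes "U \<subseteq> carrier G" "a \<in> word_ball G U r" "b \<in> word_ball G U s"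
  shows "a \<otimes> b \<in> word_ball G U (r + s)"
proof -
  obtain xs ys where "a = foldr (\<otimes>) xs \<one>" "length xs \<le> r" "set xs \<subseteq> U \<union> m_inv G ` U"
    and "b = foldr (\<otimes>) ys \<one>" "length ys \<le> s" "set ys \<subseteq> U \<union> m_inv G ` U"
    using assms(2,3) unfolding word_ball_iff by blast
  moreover have "set xs \<subseteq> carrier G" "set ys \<subseteq> carrier G"
    using calculation assms(1) by auto
  ultimately show ?thesis
    unfolding word_ball_iff
    by (intro exI[of _ "xs @ ys"]) (simp add: foldr_mult_append del: foldr_append)
qed

lemma word_ball_inv:
  assumes "U \<subseteq> carrier G" "a \<in> word_ball G U r"
  shows "inv a \<in> word_ball G U r"
proof -
  obtain xs where xs: "a = foldr (\<otimes>) xs \<one>" "length xs \<le> r" "set xs \<subseteq> U \<union> m_inv G ` U"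
    using assms(2) unfolding word_ball_iff by blast
  have "set (rev (map (m_inv G) xs)) \<subseteq> m_inv G ` (U \<union> m_inv G ` U)"
    using xs(3) by auto
  also have "\<dots> \<subseteq> U \<union> m_inv G ` U"
    using assms(1) by (auto simp: subset_iff)
  finally have "set (rev (map (m_inv G) xs)) \<subseteq> U \<union> m_inv G ` U" .
  moreover have "set xs \<subseteq> carrier G" using xs(3) assms(1) by auto
  ultimately show ?thesis
    unfolding word_ball_iff using xs by (intro exI[of _ "rev (map (m_inv G) xs)"]) (simp add: foldr_mult_rev_inv)
qed

lemma word_ball_SucE:
  assumes "U \<subseteq> carrier G" "a \<in> word_ball G U (Suc k)"
  obtains "a \<in> word_ball G U k"
    | b x where "b \<in> word_ball G U k" "x \<in> U \<union> m_inv G ` U" "a = b \<otimes> x"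
proof -
  obtain xs where xs: "a = foldr (\<otimes>) xs \<one>" "length xs \<le> Suc k" "set xs \<subseteq> U \<union> m_inv G ` U"
    using assms(2) unfolding word_ball_iff by blast
  show thesis
  proof (cases xs rule: rev_exhaust)
    case Nil
    then show thesis using that(1) xs by (simp add: one_in_word_ball)
  next
    case (snoc ys x)
    have "foldr (\<otimes>) ys \<one> \<in> word_ball G U k"
      using xs snoc unfolding word_ball_iff by auto
    moreover have "x \<in> U \<union> m_inv G ` U" using xs(3) snoc by simp
    moreover have "set ys \<subseteq> carrier G" "x \<in> carrier G"
      using xs(3) snoc assms(1) by auto
    then have "a = foldr (\<otimes>) ys \<one> \<otimes> x"
      using xs(1) snoc by (simp add: foldr_mult_append del: foldr_append)
    ultimately show thesis by (rule that(2))
  qed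
qed

lemma generate_subset_word_balls:
  assumes "U \<subseteq> carrier G"
  shows "generate G U \<subseteq> (\<Union>r. word_ball G U r)"
proof
  fix g assume "g \<in> generate G U"
  then show "g \<in> (\<Union>r. word_ball G U r)"
  proof induction
    case one then show ?case using one_in_word_ball by blast
  next
    case (incl h) then show ?case using letter_in_word_ball[OF assms] by blast
  next
    case (inv h) then show ?case using letter_in_word_ball[OF assms] by blast
  next
    case (eng h1 h2) then show ?case using word_ball_mult[OF assms] by blast
  qed
qed

lemma finite_word_ball: "finite U \<Longrightarrow> finite (word_ball G U r)"
proof -
  assume "finite U"
  then have "finite {xs. set xs \<subseteq> U \<union> m_inv G ` U \<and> length xs \<le> r}"
    by (intro finite_lists_length_le) auto
  moreover have "word_ball G U r = (\<lambda>xs. foldr (\<otimes>) xs \<one>) ` {xs. set xs \<subseteq> U \<union> m_inv G ` U \<and> length xs \<le> r}"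
    unfolding word_ball_def by auto
  ultimately show ?thesis by simp
qed

lemma rcos_eq_imp_mult_inv_mem:
  assumes "subgroup H G" "a \<in> carrier G" "b \<in> carrier G" "H #> a = H #> b"
  shows "a \<otimes> inv b \<in> H"
  using rcos_self[OF assms(2,1)] subgroup.rcos_module_imp[OF assms(1) is_group assms(3)] assms(4)
  by simp

lemma cosets_of_word_ball_subset_rcosets:
  assumes "U \<subseteq> carrier G" "subgroup H G"
  shows "(\<lambda>t. H #> t) ` word_ball G U r \<subseteq> rcosets H"
  using word_ball_subset_carrier[OF assms(1)] subgroup.subset[OF assms(2)]
  by (auto intro: rcosetsI)

lemma cosets_of_word_ball_subset_if_stable:
  assumes U: "U \<subseteq> carrier G" and H: "subgroup H G"
    and stable: "(\<lambda>t. H #> t) ` word_ball G U (Suc k) \<subseteq> (\<lambda>t. H #> t) ` word_ball G U k"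
  shows "(\<lambda>t. H #> t) ` word_ball G U m \<subseteq> (\<lambda>t. H #> t) ` word_ball G U k"
proof (induction m)
  case 0
  show ?case using word_ball_mono[of 0 k] by blast
next
  case (Suc m)
  show ?case
  proof
    fix c assume "c \<in> (\<lambda>t. H #> t) ` word_ball G U (Suc m)"
    then obtain a where a: "a \<in> word_ball G U (Suc m)" "c = H #> a" by blast
    from U a(1) show "c \<in> (\<lambda>t. H #> t) ` word_ball G U k"
    proof (cases rule: word_ball_SucE)
      case 1
      then show ?thesis using Suc.IH a(2) by blast
    next
      case (2 b x)
      then obtain t where t: "t \<in> word_ball G U k" "H #> b = H #> t"
        using Suc.IH by blast
      have carrier: "H \<subseteq> carrier G" "b \<in> carrier G" "t \<in> carrier G" "x \<in> carrier G"
        using 2(1,2) t(1) U subgroup.subset[OF H]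
          word_ball_subset_carrier[OF U, of m] word_ball_subset_carrier[OF U, of k] by auto
      have "c = (H #> b) #> x" using a(2) 2(3) carrier by (simp add: coset_mult_assoc)
      also have "\<dots> = H #> (t \<otimes> x)" using t(2) carrier by (simp add: coset_mult_assoc)
      finally have "c \<in> (\<lambda>t. H #> t) ` word_ball G U (Suc k)"
        using word_ball_mult[OF U t(1) letter_in_word_ball[OF U 2(2)]] by simp
      then show ?thesis using stable by blast
    qed
  qed
qed

lemma cosets_of_word_ball_stable:
  assumes U: "U \<subseteq> carrier G" and gen: "generate G U = carrier G" and H: "subgroup H G"
    and stable: "(\<lambda>t. H #> t) ` word_ball G U (Suc k) \<subseteq> (\<lambda>t. H #> t) ` word_ball G U k"
  shows "(\<lambda>t. H #> t) ` word_ball G U k = rcosets H"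
proof
  show "rcosets H \<subseteq> (\<lambda>t. H #> t) ` word_ball G U k"
  proof
    fix c assume "c \<in> rcosets H"
    then obtain g where g: "g \<in> carrier G" "c = H #> g" unfolding RCOSETS_def by blast
    then obtain m where "g \<in> word_ball G U m"
      using generate_subset_word_balls[OF U] gen by blast
    then have "c \<in> (\<lambda>t. H #> t) ` word_ball G U m" using g(2) by (rule rev_image_eqI)
    then show "c \<in> (\<lambda>t. H #> t) ` word_ball G U k"
      using cosets_of_word_ball_subset_if_stable[OF U H stable] by blast
  qed
qed (rule cosets_of_word_ball_subset_rcosets[OF U H])

lemma cosets_of_word_ball_card_index:
  assumes "U \<subseteq> carrier G" "generate G U = carrier G" "subgroup H G" "finite (rcosets H)"
  shows "(\<lambda>t. H #> t) ` word_ball G U (card (rcosets H)) = rcosets H"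
proof (rule increasing_chain_saturates[OF assms(4)])
  show "(\<lambda>t. H #> t) ` word_ball G U k \<subseteq> (\<lambda>t. H #> t) ` word_ball G U (Suc k)" for k
    using word_ball_mono[of k "Suc k"] by (rule image_mono) simp
  show "(\<lambda>t. H #> t) ` word_ball G U k \<subseteq> rcosets H" for k
    by (rule cosets_of_word_ball_subset_rcosets[OF assms(1,3)])
  show "(\<lambda>t. H #> t) ` word_ball G U k = rcosets H"
    if "(\<lambda>t. H #> t) ` word_ball G U (Suc k) \<subseteq> (\<lambda>t. H #> t) ` word_ball G U k" for k
    using cosets_of_word_ball_stable[OF assms(1-3) that] .
qed

lemma schreier_generator_in_word_ball:
  assumes U: "U \<subseteq> carrier G" and H: "subgroup H G"
    and cover: "(\<lambda>t. H #> t) ` word_ball G U r = rcosets H"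
    and t: "t \<in> word_ball G U r" and x: "x \<in> U \<union> m_inv G ` U"
  obtains t' where "t' \<in> word_ball G U r" "t \<otimes> x \<otimes> inv t' \<in> H \<inter> word_ball G U (2 * r + 1)"
proof -
  have tx: "t \<otimes> x \<in> word_ball G U (r + 1)"
    by (rule word_ball_mult[OF U t letter_in_word_ball[OF U x]])
  then have txc: "t \<otimes> x \<in> carrier G" using word_ball_subset_carrier[OF U] by blast
  then obtain t' where t': "t' \<in> word_ball G U r" "H #> (t \<otimes> x) = H #> t'"
    using cover rcosetsI[OF subgroup.subset[OF H]] by (metis imageE)
  have "t' \<in> carrier G" using t'(1) word_ball_subset_carrier[OF U] by blast
  then have "t \<otimes> x \<otimes> inv t' \<in> H"
    by (rule rcos_eq_imp_mult_inv_mem[OF H txc _ t'(2)])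
  moreover have "t \<otimes> x \<otimes> inv t' \<in> word_ball G U (2 * r + 1)"
    using word_ball_mult[OF U tx word_ball_inv[OF U t'(1)]] by (simp add: mult_2)
  ultimately show thesis using that t'(1) by blast
qed

lemma word_ball_factorization:
  assumes U: "U \<subseteq> carrier G" and H: "subgroup H G"
    and cover: "(\<lambda>t. H #> t) ` word_ball G U r = rcosets H"
    and g: "g \<in> word_ball G U m"
  shows "\<exists>k\<in>generate G (H \<inter> word_ball G U (2 * r + 1)). \<exists>t\<in>word_ball G U r. g = k \<otimes> t"
  using g
proof (induction m arbitrary: g)
  case 0
  then have "g \<in> word_ball G U r" using word_ball_mono[of 0 r] by blast
  moreover have "g \<in> carrier G" using 0 word_ball_subset_carrier[OF U] by blast
  then have "g = \<one> \<otimes> g" by simp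
  ultimately show ?case by (intro bexI[where x = \<one>] bexI[where x = g] generate.one)
next
  case (Suc m)
  from U Suc.prems show ?case
  proof (cases rule: word_ball_SucE)
    case 1
    then show ?thesis by (rule Suc.IH)
  next
    case (2 b x)
    let ?V = "H \<inter> word_ball G U (2 * r + 1)"
    obtain k t where k: "k \<in> generate G ?V" and t: "t \<in> word_ball G U r" and b: "b = k \<otimes> t"
      using Suc.IH 2(1) by blast
    obtain t' where t': "t' \<in> word_ball G U r" and h: "t \<otimes> x \<otimes> inv t' \<in> ?V"
      using schreier_generator_in_word_ball[OF U H cover t 2(2)] .
    from k generate.incl[OF h] have "k \<otimes> (t \<otimes> x \<otimes> inv t') \<in> generate G ?V"
      by (rule generate.eng)
    moreover have "g = k \<otimes> (t \<otimes> x \<otimes> inv t') \<otimes> t'"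
    proof -
      have "k \<in> carrier G" using k generate_subgroup_incl[of ?V H] H subgroup.subset by blast
      moreover have "x \<in> carrier G" "t \<in> carrier G" "t' \<in> carrier G"
        using 2(2) U t t' word_ball_subset_carrier[OF U, of r] by auto
      ultimately show ?thesis using 2(3) b by (simp add: m_assoc)
    qed
    ultimately show ?thesis
      using t' by (intro bexI[where x = "k \<otimes> (t \<otimes> x \<otimes> inv t')"] bexI[where x = t'])
  qed
qed

lemma generate_inter_word_ball_if_transversal:
  assumes U: "U \<subseteq> carrier G" and gen: "generate G U = carrier G" and H: "subgroup H G"
    and cover: "(\<lambda>t. H #> t) ` word_ball G U r = rcosets H"
  shows "generate G (H \<inter> word_ball G U (2 * r + 1)) = H"
proof
  let ?V = "H \<inter> word_ball G U (2 * r + 1)"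
  show "generate G ?V \<subseteq> H" by (rule generate_subgroup_incl[OF _ H]) blast
  show "H \<subseteq> generate G ?V"
  proof
    fix g assume gH: "g \<in> H"
    then have "g \<in> generate G U" using gen subgroup.subset[OF H] by blast
    then obtain m where "g \<in> word_ball G U m" using generate_subset_word_balls[OF U] by blast
    then obtain k t where k: "k \<in> generate G ?V" and t: "t \<in> word_ball G U r" and g: "g = k \<otimes> t"
      using word_ball_factorization[OF U H cover] by blast
    have kH: "k \<in> H" using k \<open>generate G ?V \<subseteq> H\<close> by blast
    moreover have "k \<in> carrier G" "t \<in> carrier G"
      using kH t word_ball_subset_carrier[OF U] subgroup.subset[OF H] by blast+
    ultimately have "t = inv k \<otimes> g" using g by (simp add: m_assoc[symmetric])
    then have "t \<in> H" using kH gH by (simp add: subgroup.m_closed[OF H] subgroup.m_inv_closed[OF H])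
    moreover have "t \<in> word_ball G U (2 * r + 1)" using t word_ball_mono[of r "2 * r + 1"] by auto
    ultimately have "t \<in> ?V" by blast
    then have "t \<in> generate G ?V" by (rule generate.incl)
    with k show "g \<in> generate G ?V" unfolding g by (rule generate.eng)
  qed
qed

lemma generate_subgroup_inter_word_ball:
  assumes "U \<subseteq> carrier G" "generate G U = carrier G" "subgroup H G" "finite (rcosets H)"
    and "2 * card (rcosets H) + 1 \<le> r"
  shows "generate G (H \<inter> word_ball G U r) = H"
proof
  have "H = generate G (H \<inter> word_ball G U (2 * card (rcosets H) + 1))"
    using generate_inter_word_ball_if_transversal[OF assms(1-3) cosets_of_word_ball_card_index[OF assms(1-4)]]
    by simp
  also have "\<dots> \<subseteq> generate G (H \<inter> word_ball G U r)"
    using word_ball_mono[OF assms(5)] by (intro mono_generate) auto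
  finally show "H \<subseteq> generate G (H \<inter> word_ball G U r)" .
  show "generate G (H \<inter> word_ball G U r) \<subseteq> H"
    by (rule generate_subgroup_incl[OF _ assms(3)]) blast
qed

lemma card_rcoset_fiber_le:
  assumes U: "U \<subseteq> carrier G" "finite U" and H: "subgroup H G"
  shows "card {u \<in> U. H #> u = c} \<le> card (H \<inter> word_ball G U 2)"
proof (cases "{u \<in> U. H #> u = c} = {}")
  case False
  then obtain u\<^sub>0 where u\<^sub>0: "u\<^sub>0 \<in> U" "H #> u\<^sub>0 = c" by blast
  have "inj_on (\<lambda>a. a \<otimes> inv u\<^sub>0) {u \<in> U. H #> u = c}"
    using inj_on_multc[of "inv u\<^sub>0"] u\<^sub>0(1) U(1) by (auto intro: inj_on_subset)
  moreover have "(\<lambda>a. a \<otimes> inv u\<^sub>0) ` {u \<in> U. H #> u = c} \<subseteq> H \<inter> word_ball G U 2"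
  proof (rule image_subsetI)
    fix a assume a: "a \<in> {u \<in> U. H #> u = c}"
    have "a \<otimes> inv u\<^sub>0 \<in> H"
      using rcos_eq_imp_mult_inv_mem[OF H] a u\<^sub>0 U(1) by auto
    moreover have "a \<otimes> inv u\<^sub>0 \<in> word_ball G U (1 + 1)"
      using a u\<^sub>0(1) by (intro word_ball_mult word_ball_inv letter_in_word_ball U(1)) auto
    ultimately show "a \<otimes> inv u\<^sub>0 \<in> H \<inter> word_ball G U 2" by (simp add: numeral_2_eq_2)
  qed
  ultimately show ?thesis
    using finite_word_ball[OF U(2)] by (intro card_inj_on_le) auto
qed (simp only: card.empty zero_le)

lemma card_le_index_mult_card_inter_word_ball:
  assumes U: "U \<subseteq> carrier G" "finite U" and H: "subgroup H G" and fin: "finite (rcosets H)"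
    and r: "2 \<le> r"
  shows "card U \<le> card (rcosets H) * card (H \<inter> word_ball G U r)"
proof -
  have "U = (\<Union>c\<in>rcosets H. {u \<in> U. H #> u = c})"
    using U(1) rcosetsI[OF subgroup.subset[OF H]] by blast
  then have "card U \<le> (\<Sum>c\<in>rcosets H. card {u \<in> U. H #> u = c})"
    using card_UN_le[OF fin] by metis
  also have "\<dots> \<le> (\<Sum>c\<in>rcosets H. card (H \<inter> word_ball G U 2))"
    by (intro sum_mono card_rcoset_fiber_le[OF U H])
  also have "\<dots> \<le> (\<Sum>c\<in>rcosets H. card (H \<inter> word_ball G U r))"
    using finite_word_ball[OF U(2)] word_ball_mono[OF r] by (intro sum_mono card_mono) auto
  finally show ?thesis by simp
qed

end

theorem proposition2p33:
  fixes G (structure) and U H :: "'a set" and d :: nat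
  assumes "group G"
    and "finite U" and "U \<subseteq> carrier G" and "generate G U = carrier G"
    and "subgroup H G"
    and "finite (rcosets\<^bsub>G\<^esub> H)" and "card (rcosets\<^bsub>G\<^esub> H) = d"
  shows "\<exists>V. finite V \<and> V \<subseteq> H \<and> generate G V = H
           \<and> real (card V) \<ge> real (card U) / real d
           \<and> V \<subseteq> word_ball G U (2 * fact d + 1)"
proof -
  interpret group G by (rule assms(1))
  define V where "V = H \<inter> word_ball G U (2 * fact d + 1)"
  have "2 * d + 1 \<le> 2 * fact d + 1" using fact_ge_self[of d] by simp
  then have generate_V: "generate G V = H"
    unfolding V_def using generate_subgroup_inter_word_ball[OF assms(3,4,5,6)] assms(7) by simp
  have "card U \<le> d * card V"
    unfolding V_def using card_le_index_mult_card_inter_word_ball[OF assms(3,2,5,6)] assms(7) by simp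
  moreover have "rcosets H \<noteq> {}"
    using rcosetsI[OF subgroup.subset[OF assms(5)] one_closed] by blast
  then have "d > 0" using assms(6) unfolding assms(7)[symmetric] by (simp add: card_gt_0_iff)
  ultimately have card_V: "real (card U) / real d \<le> real (card V)"
    by (simp add: divide_le_eq mult.commute flip: of_nat_mult)
  show ?thesis
  proof (intro exI[of _ V] conjI)
    show "finite V" unfolding V_def using finite_word_ball[OF assms(2)] by blast
  qed (use generate_V card_V in \<open>auto simp: V_def\<close>)
qed

end
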